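(* Let $n$ be a positive integer and $k$ an integer with $0\le k\le n$. Then $$e_k\left(\left\{\sin^2\left(\tfrac{(2j-1)\pi}{4n}\right) : j=1,\dots,n\right\}\right) = \frac{2n\,4^{-k}(2n-k-1)!}{k!\,(2n-2k)!}.$$
   Context: $e_k(\alpha_1,\dots,\alpha_n)$ denotes the degree-$k$ elementary symmetric function of $\alpha_1,\dots,\alpha_n$ (with $e_0=1$). *)

theory Defs
  imports Complex_Main
begin

definition esym :: "nat \<Rightarrow> 'i set \<Rightarrow> ('i \<Rightarrow> 'a::comm_ring_1) \<Rightarrow> 'a" where
  "esym k I x = (\<Sum>S\<in>{S. S \<subseteq> I \<and> card S = k}. \<Prod>i\<in>S. x i)"

end

theory Submission
  imports Defs "HOL-Computational_Algebra.Polynomial"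
begin

(* The polynomial D_n(y) = sum_m (-4)^m C(n+m, 2m) y^m satisfies D_n(sin^2 t) cos t = cos((2n+1) t),
   by the three-term recurrence cos((2n+5)t) = 2 cos(2t) cos((2n+3)t) - cos((2n+1)t).
   Hence D_n + D_(n-1) vanishes at sin^2 t whenever cos(2nt) = 0 and cos t is nonzero, since
   cos((2n+1)t) + cos((2n-1)t) = 2 cos(2nt) cos t. The n distinct numbers sin^2((2j-1) pi/(4n)),
   j = 1..n, are therefore all the roots of this polynomial of degree n, and Vieta's formulas read
   the elementary symmetric functions off its coefficients, which are sums of two binomials. *)

lemma esym_0: "finite I \<Longrightarrow> esym 0 I x = 1"
proof -
  assume "finite I"
  then have "{S. S \<subseteq> I \<and> card S = 0} = {{}}"
    by (auto dest: finite_subset)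
  then show ?thesis
    by (simp add: esym_def)
qed

lemma esym_eq_0_if_card_less: "finite I \<Longrightarrow> card I < k \<Longrightarrow> esym k I x = 0"
proof -
  assume "finite I" "card I < k"
  have "card S \<noteq> k" if "S \<subseteq> I" for S
    using card_mono[OF \<open>finite I\<close> that] \<open>card I < k\<close> by simp
  then have no_subsets: "{S. S \<subseteq> I \<and> card S = k} = {}"
    by blast
  show ?thesis
    unfolding esym_def no_subsets by simp
qed

lemma esym_insert_Suc:
  assumes "finite I" "a \<notin> I"
  shows "esym (Suc k) (insert a I) x = esym (Suc k) I x + x a * esym k I x"
proof -
  define subsets where "subsets j = {S. S \<subseteq> I \<and> card S = j}" for j
  have fin: "finite (subsets j)" for j
    using assms(1) by (simp add: subsets_def)
  have split: "{S. S \<subseteq> insert a I \<and> card S = Suc k} = subsets (Suc k) \<union> insert a ` subsets k"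
  proof (intro equalityI subsetI)
    fix S assume S: "S \<in> {S. S \<subseteq> insert a I \<and> card S = Suc k}"
    then have "finite S"
      using assms(1) finite_subset by auto
    with S show "S \<in> subsets (Suc k) \<union> insert a ` subsets k"
      unfolding subsets_def
      by (cases "a \<in> S") (auto intro!: image_eqI[of S _ "S - {a}"])
  next
    fix S assume "S \<in> subsets (Suc k) \<union> insert a ` subsets k"
    then show "S \<in> {S. S \<subseteq> insert a I \<and> card S = Suc k}"
      unfolding subsets_def using assms
      by (auto intro!: card_insert_disjoint dest: finite_subset)
  qed
  have inj: "inj_on (insert a) (subsets k)"
    unfolding subsets_def inj_on_def by (metis Diff_insert_absorb in_mono mem_Collect_eq assms(2))
  have "(\<Sum>S\<in>insert a ` subsets k. prod x S) = (\<Sum>S\<in>subsets k. prod x (insert a S))"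
    by (rule sum.reindex[OF inj, unfolded comp_def])
  also have "\<dots> = x a * esym k I x"
    unfolding esym_def subsets_def[symmetric] sum_distrib_left
  proof (rule sum.cong[OF refl])
    fix S assume "S \<in> subsets k"
    then have "finite S" "a \<notin> S"
      using assms finite_subset by (auto simp: subsets_def)
    then show "prod x (insert a S) = x a * prod x S"
      by simp
  qed
  moreover have "esym (Suc k) (insert a I) x = esym (Suc k) I x + (\<Sum>S\<in>insert a ` subsets k. prod x S)"
    unfolding esym_def split subsets_def[symmetric]
    by (rule sum.union_disjoint) (use fin assms(2) in \<open>auto simp: subsets_def\<close>)
  ultimately show ?thesis
    by simp
qed

lemma coeff_prod_linear_factors:
  fixes x :: "'i \<Rightarrow> 'a::comm_ring_1"
  assumes "finite I"
  shows "coeff (\<Prod>i\<in>I. [:- x i, 1:]) m =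
           (if m \<le> card I then (-1) ^ (card I - m) * esym (card I - m) I x else 0)"
  using assms
proof (induction I arbitrary: m rule: finite_induct)
  case empty
  then show ?case
    by (simp add: esym_0 coeff_1)
next
  case (insert a I)
  define p where "p = (\<Prod>i\<in>I. [:- x i, 1:])"
  have IH: "coeff p j = (if j \<le> card I then (-1) ^ (card I - j) * esym (card I - j) I x else 0)" for j
    using insert.IH by (simp add: p_def)
  have "coeff (\<Prod>i\<in>insert a I. [:- x i, 1:]) m =
          (if m = 0 then 0 else coeff p (m - 1)) - x a * coeff p m"
    using insert.hyps by (cases m) (simp_all add: p_def algebra_simps)
  also have "\<dots> = (if m \<le> card (insert a I)
                     then (-1) ^ (card (insert a I) - m) * esym (card (insert a I) - m) (insert a I) x
                     else 0)"
  proof (cases m)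
    case 0
    then show ?thesis
      using insert.hyps IH[of 0] esym_insert_Suc[OF insert.hyps, of "card I" x]
        esym_eq_0_if_card_less[OF insert.hyps(1), of "Suc (card I)" x]
      by simp
  next
    case (Suc j)
    show ?thesis
    proof (cases "m \<le> card I")
      case True
      then have "card I - j = Suc (card I - m)"
        using Suc by simp
      then show ?thesis
        using True Suc insert.hyps IH[of j] IH[of m] esym_insert_Suc[OF insert.hyps, of "card I - m" x]
        by (simp add: algebra_simps)
    next
      case False
      then show ?thesis
        using Suc insert.hyps IH[of j] IH[of m] esym_0[of I x] esym_0[of "insert a I" x]
        by auto
    qed
  qed
  finally show ?case .
qed

lemma eq_smult_prod_linear_factors_if_roots:
  fixes p :: "'a::idom poly"
  assumes "finite I" "inj_on x I" "degree p \<le> card I" "\<And>i. i \<in> I \<Longrightarrow> poly p (x i) = 0"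
  shows "p = smult (coeff p (card I)) (\<Prod>i\<in>I. [:- x i, 1:])"
proof (rule poly_eqI_degree_lead_coeff[of _ "card I" _ "x ` I"])
  show "coeff p (card I) = coeff (smult (coeff p (card I)) (\<Prod>i\<in>I. [:- x i, 1:])) (card I)"
    using assms(1) by (simp add: coeff_prod_linear_factors esym_0)
  show "card I \<le> card (x ` I)"
    using assms(2) by (simp add: card_image)
  show "degree (smult (coeff p (card I)) (\<Prod>i\<in>I. [:- x i, 1:])) \<le> card I"
    using assms(1) by (intro degree_le) (simp add: coeff_prod_linear_factors)
  show "poly p z = poly (smult (coeff p (card I)) (\<Prod>i\<in>I. [:- x i, 1:])) z" if "z \<in> x ` I" for z
    using that assms(1,4) by (auto simp: poly_prod)
qed (fact assms(3))

lemma esym_eq_coeff_if_roots: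
  fixes p :: "'a::idom poly"
  assumes "finite I" "inj_on x I" "degree p \<le> card I" "\<And>i. i \<in> I \<Longrightarrow> poly p (x i) = 0"
    and "k \<le> card I"
  shows "coeff p (card I) * esym k I x = (-1) ^ k * coeff p (card I - k)"
proof -
  have "coeff p (card I - k) = coeff (smult (coeff p (card I)) (\<Prod>i\<in>I. [:- x i, 1:])) (card I - k)"
    using eq_smult_prod_linear_factors_if_roots[OF assms(1-4)] by simp
  also have "\<dots> = coeff p (card I) * ((-1) ^ k * esym k I x)"
    using assms(5) by (simp add: coeff_prod_linear_factors[OF assms(1)])
  finally have "coeff p (card I - k) = coeff p (card I) * ((-1) ^ k * esym k I x)" .
  then show ?thesis
    by (simp add: mult_ac)
qed

definition odd_cos_poly :: "nat \<Rightarrow> real poly" where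
  "odd_cos_poly n = (\<Sum>m\<le>n. monom ((-4) ^ m * real ((n + m) choose (2 * m))) m)"

lemma coeff_odd_cos_poly: "coeff (odd_cos_poly n) m = (-4) ^ m * real ((n + m) choose (2 * m))"
  by (cases "m \<le> n") (simp_all add: odd_cos_poly_def coeff_sum)

lemma degree_odd_cos_poly: "degree (odd_cos_poly n) \<le> n"
  by (rule degree_le) (simp add: coeff_odd_cos_poly)

lemma odd_cos_poly_Suc_Suc:
  "odd_cos_poly (Suc (Suc n)) = [:2, -4:] * odd_cos_poly (Suc n) - odd_cos_poly n"
proof (rule poly_eqI)
  fix m
  show "coeff (odd_cos_poly (Suc (Suc n))) m = coeff ([:2, -4:] * odd_cos_poly (Suc n) - odd_cos_poly n) m"
  proof (cases m)
    case 0
    then show ?thesis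
      by (simp add: coeff_odd_cos_poly)
  next
    case (Suc j)
    define a where "a = n + j + 1"
    have "(Suc (Suc a) choose Suc (Suc (2 * j))) + (a choose Suc (Suc (2 * j)))
            = 2 * (Suc a choose Suc (Suc (2 * j))) + (a choose (2 * j))"
      by (simp add: binomial_Suc_Suc)
    then have "real (Suc (Suc a) choose Suc (Suc (2 * j))) + real (a choose Suc (Suc (2 * j)))
            = 2 * real (Suc a choose Suc (Suc (2 * j))) + real (a choose (2 * j))"
      by (metis of_nat_add of_nat_mult of_nat_numeral)
    then show ?thesis
      by (simp add: coeff_odd_cos_poly Suc a_def algebra_simps)
  qed
qed

lemma poly_odd_cos_poly_sin_sq: "poly (odd_cos_poly n) (sin t ^ 2) * cos t = cos ((2 * real n + 1) * t)"
proof (induction n rule: induct_nat_012)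
  case 0
  then show ?case
    by (simp add: odd_cos_poly_def)
next
  case 1
  have "poly (odd_cos_poly 1) y = 1 - 4 * y" for y
    by (simp add: odd_cos_poly_def poly_monom numeral_2_eq_2)
  then have "poly (odd_cos_poly 1) (sin t ^ 2) * cos t = (1 - 4 * (1 - cos t ^ 2)) * cos t"
    by (simp add: sin_squared_eq)
  also have "\<dots> = cos (3 * t)"
    unfolding cos_treble_cos by (simp add: power3_eq_cube power2_eq_square algebra_simps)
  finally show ?case
    by simp
next
  case (ge2 n)
  let ?s = "sin t ^ 2"
  have "poly (odd_cos_poly (Suc (Suc n))) ?s * cos t
          = 2 * (1 - 2 * ?s) * (poly (odd_cos_poly (Suc n)) ?s * cos t) - poly (odd_cos_poly n) ?s * cos t"
    by (simp add: odd_cos_poly_Suc_Suc algebra_simps)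
  also have "\<dots> = 2 * cos (2 * t) * cos ((2 * real n + 3) * t) - cos ((2 * real n + 1) * t)"
    using ge2.IH by (simp add: cos_double_sin add.commute add.left_commute)
  also have "\<dots> = cos ((2 * real n + 5) * t)"
    using cos_times_cos[of "(2 * real n + 3) * t" "2 * t"] by (simp add: algebra_simps)
  finally show ?case
    by (simp add: algebra_simps)
qed

lemma poly_odd_cos_poly_add_pred_eq_0:
  assumes "n \<ge> 1" "cos t \<noteq> 0" "cos (2 * real n * t) = 0"
  shows "poly (odd_cos_poly n + odd_cos_poly (n - 1)) (sin t ^ 2) = 0"
proof -
  have "poly (odd_cos_poly n + odd_cos_poly (n - 1)) (sin t ^ 2) * cos t
          = poly (odd_cos_poly n) (sin t ^ 2) * cos t + poly (odd_cos_poly (n - 1)) (sin t ^ 2) * cos t"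
    by (simp add: distrib_right)
  also have "\<dots> = cos ((2 * real n + 1) * t) + cos ((2 * real (n - 1) + 1) * t)"
    by (simp only: poly_odd_cos_poly_sin_sq)
  also have "\<dots> = cos (2 * real n * t + t) + cos (2 * real n * t - t)"
    using assms(1) by (simp add: of_nat_diff algebra_simps)
  also have "\<dots> = 2 * cos (2 * real n * t) * cos t"
    by (simp add: cos_add cos_diff)
  finally show ?thesis
    using assms(2,3) by simp
qed

lemma coeff_odd_cos_poly_add_pred:
  assumes "k \<le> n"
  shows "coeff (odd_cos_poly n + odd_cos_poly (n - 1)) (n - k)
           = (-4) ^ (n - k) * (real ((2 * n - k) choose (2 * n - 2 * k))
                               + real ((2 * n - k - 1) choose (2 * n - 2 * k)))"
proof -
  have "n + (n - k) = 2 * n - k" "n - 1 + (n - k) = 2 * n - k - 1" "2 * (n - k) = 2 * n - 2 * k"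
    using assms by auto
  then show ?thesis
    by (simp add: coeff_odd_cos_poly algebra_simps)
qed

lemma choose_add_choose_pred_eq_fact:
  assumes "k \<le> n" "1 \<le> n"
  shows "real ((2 * n - k) choose (2 * n - 2 * k)) + real ((2 * n - k - 1) choose (2 * n - 2 * k))
           = 2 * real n * fact (2 * n - k - 1) / (fact k * fact (2 * n - 2 * k))"
proof (cases "k = 0")
  case True
  have "fact (2 * n) = (real (2 * n) * fact (2 * n - 1) :: real)"
    using fact_reduce[of "2 * n"] assms by simp
  then show ?thesis
    using True assms by simp
next
  case False
  have choose_fact: "real ((2 * n - k) choose (2 * n - 2 * k)) = fact (2 * n - k) / (fact (2 * n - 2 * k) * fact k)"
    using binomial_fact[where 'a = real, of "2 * n - 2 * k" "2 * n - k"] assms by simp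
  have choose_pred_fact: "real ((2 * n - k - 1) choose (2 * n - 2 * k))
                   = fact (2 * n - k - 1) / (fact (2 * n - 2 * k) * fact (k - 1))"
    using binomial_fact[where 'a = real, of "2 * n - 2 * k" "2 * n - k - 1"] assms False
    by simp
  have fact_top: "fact (2 * n - k) = (real (2 * n - k) * fact (2 * n - k - 1) :: real)"
    by (rule fact_reduce) (use assms in simp)
  have fact_k: "fact k = (real k * fact (k - 1) :: real)"
    by (rule fact_reduce) (use False in simp)
  have top: "real (2 * n - k) = 2 * real n - real k"
    using assms by simp
  show ?thesis
    unfolding choose_fact choose_pred_fact fact_top fact_k top using False by (simp add: field_simps)
qed

lemma inj_on_sin_sq: "inj_on (\<lambda>t. sin t ^ 2) {0..pi / 2}"
proof (rule inj_onI)
  fix s t assume s: "s \<in> {0..pi / 2}" and t: "t \<in> {0..pi / 2}" and sq: "sin s ^ 2 = sin t ^ 2"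
  have "sin s \<ge> 0" "sin t \<ge> 0"
    using s t by (simp_all add: sin_ge_zero)
  with sq have "sin s = sin t"
    by simp
  moreover have "- (pi / 2) \<le> s" "s \<le> pi / 2" "- (pi / 2) \<le> t" "t \<le> pi / 2"
    using s t pi_gt_zero by auto
  ultimately show "s = t"
    using sin_inj_pi by blast
qed

lemma odd_angle_in_first_quadrant:
  assumes "j \<in> {1..n}"
  shows "(2 * real j - 1) * pi / (4 * real n) \<in> {0<..<pi / 2}"
proof -
  define q where "q = (2 * real j - 1) / (2 * real n)"
  have "0 < q" "q < 1"
    using assms by (auto simp: q_def field_simps)
  have "0 < q * (pi / 2)"
    using \<open>0 < q\<close> by simp
  moreover have "q * (pi / 2) < 1 * (pi / 2)"
    using \<open>q < 1\<close> by (intro mult_strict_right_mono) simp_all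
  moreover have "(2 * real j - 1) * pi / (4 * real n) = q * (pi / 2)"
    by (simp add: q_def)
  ultimately show ?thesis
    by (simp only: greaterThanLessThan_iff) simp
qed

lemma inj_on_sin_sq_odd_angles:
  "inj_on (\<lambda>j. sin ((2 * real j - 1) * pi / (4 * real n)) ^ 2) {1..n}"
proof (rule comp_inj_on[of "\<lambda>j. (2 * real j - 1) * pi / (4 * real n)", unfolded comp_def])
  show "inj_on (\<lambda>j. (2 * real j - 1) * pi / (4 * real n)) {1..n}"
    by (auto intro!: inj_onI)
  show "inj_on (\<lambda>t. sin t ^ 2) ((\<lambda>j. (2 * real j - 1) * pi / (4 * real n)) ` {1..n})"
    by (rule inj_on_subset[OF inj_on_sin_sq]) (use odd_angle_in_first_quadrant in fastforce)
qed

lemma poly_odd_cos_poly_add_pred_odd_angle: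
  assumes "j \<in> {1..n}"
  shows "poly (odd_cos_poly n + odd_cos_poly (n - 1)) (sin ((2 * real j - 1) * pi / (4 * real n)) ^ 2) = 0"
proof (rule poly_odd_cos_poly_add_pred_eq_0)
  show "n \<ge> 1"
    using assms by simp
  have "cos ((2 * real j - 1) * pi / (4 * real n)) > 0"
    using odd_angle_in_first_quadrant[OF assms] pi_gt_zero
    by (intro cos_gt_zero_pi) (simp_all only: greaterThanLessThan_iff, linarith+)
  then show "cos ((2 * real j - 1) * pi / (4 * real n)) \<noteq> 0"
    by simp
  have "2 * real n * ((2 * real j - 1) * pi / (4 * real n)) = real (2 * j - 1) * (pi / 2)"
    "odd (2 * j - 1)"
    using assms by (auto simp: of_nat_diff field_simps)
  then show "cos (2 * real n * ((2 * real j - 1) * pi / (4 * real n))) = 0"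
    unfolding cos_zero_iff by blast
qed

theorem mainTheorem6:
  fixes n k :: nat
  assumes "n \<ge> 1" and "k \<le> n"
  shows "esym k {1..n} (\<lambda>j. (sin ((2 * real j - 1) * pi / (4 * real n)))\<^sup>2)
         = 2 * real n * (1/4) ^ k * fact (2*n - k - 1) / (fact k * fact (2*n - 2*k))"
proof -
  define x where "x = (\<lambda>j :: nat. sin ((2 * real j - 1) * pi / (4 * real n)) ^ 2)"
  define P where "P = odd_cos_poly n + odd_cos_poly (n - 1)"
  define S where
    "S = real ((2 * n - k) choose (2 * n - 2 * k)) + real ((2 * n - k - 1) choose (2 * n - 2 * k))"
  have "inj_on x {1..n}"
    unfolding x_def by (rule inj_on_sin_sq_odd_angles)
  moreover have "degree P \<le> n"
    unfolding P_def using degree_odd_cos_poly[of n] degree_odd_cos_poly[of "n - 1"]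
    by (intro degree_add_le) auto
  moreover have "poly P (x j) = 0" if "j \<in> {1..n}" for j
    unfolding P_def x_def using that by (rule poly_odd_cos_poly_add_pred_odd_angle)
  ultimately have vieta: "coeff P n * esym k {1..n} x = (-1) ^ k * coeff P (n - k)"
    using esym_eq_coeff_if_roots[of "{1..n}" x P k] assms(2) by simp
  have "coeff P n = (-4) ^ n"
    using coeff_odd_cos_poly_add_pred[of 0 n] assms(1) by (simp add: P_def)
  also have "\<dots> = (-4) ^ (n - k) * (-4) ^ k"
    using assms(2) by (simp flip: power_add)
  also have "\<dots> = (-4) ^ (n - k) * (-1) ^ k * 4 ^ k"
    by (simp add: mult.assoc flip: power_mult_distrib)
  finally have "(-4) ^ (n - k) * (-1) ^ k * (4 ^ k * esym k {1..n} x) = (-4) ^ (n - k) * (-1) ^ k * S"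
    using vieta coeff_odd_cos_poly_add_pred[OF assms(2)] by (simp add: P_def S_def mult_ac)
  then have "esym k {1..n} x = (1 / 4) ^ k * S"
    by (simp add: power_one_over field_simps)
  then show ?thesis
    using choose_add_choose_pred_eq_fact[OF assms(2,1)] by (simp add: x_def S_def)
qed

end
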